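(* Let $C_1$ and $C_2$ be subsets of a topological real vector space such that $\mathrm{ri}(C_1)\subseteq C_2\subseteq\mathrm{rc}(C_1)$. If $C_1$ is strictly convex, then $C_2$ is strictly convex.
   Context: Topological real vector spaces are not assumed Hausdorff. For a subset $S$, $\mathrm{Aff}(S)$ is its affine hull; $\mathrm{ri}(S)$, $\mathrm{rc}(S)$ are the interior and closure of $S$ in the subspace topology of $\mathrm{Aff}(S)$. $]x,y[=\{(1-t)x+ty: t\in[0,1]\}\setminus\{x,y\}$. A set $C$ is strictly convex if for any two distinct $x,y\in\mathrm{rc}(C)$, $]x,y[\subseteq\mathrm{ri}(C)$. *)

theory Defs
  imports "HOL-Analysis.Analysis"
begin

text \<open>Topological real vector space (not necessarily Hausdorff): a real vector space
  carrying a topology in which addition, negation and scalar multiplication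
  (jointly, as a map on the product space, spelled out via product neighbourhoods) are continuous.\<close>
class topological_real_vector = real_vector + topological_ab_group_add +
  assumes continuous_scaleR_joint:
    "\<And>U (c::real) (x::'a). open U \<Longrightarrow> c *\<^sub>R x \<in> U \<Longrightarrow>
       \<exists>A B. open A \<and> c \<in> A \<and> open B \<and> x \<in> B \<and> (\<forall>d\<in>A. \<forall>y\<in>B. d *\<^sub>R y \<in> U)"

definition rel_closure :: "'a::topological_real_vector set \<Rightarrow> 'a set" where
  "rel_closure S = (top_of_set (affine hull S)) closure_of S"

definition strictly_convex :: "'a::topological_real_vector set \<Rightarrow> bool" where
  "strictly_convex C \<longleftrightarrow>
     (\<forall>x \<in> rel_closure C. \<forall>y \<in> rel_closure C. x \<noteq> y \<longrightarrow> open_segment x y \<subseteq> rel_interior C)"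

end

theory Submission
  imports Defs
begin

text \<open>Both sets have the same affine hull: if \<open>C\<^sub>1\<close> has two points, strict convexity
  puts every point of \<open>C\<^sub>1\<close> at the end of an open segment lying in
  \<open>ri C\<^sub>1 \<subseteq> C\<^sub>2\<close>, and otherwise \<open>C\<^sub>1\<close> is a point or empty.
  With equal affine hulls the relative topologies agree, so \<open>rc C\<^sub>2 \<subseteq> rc C\<^sub>1\<close> and
  \<open>ri C\<^sub>1 \<subseteq> ri C\<^sub>2\<close>, and strict convexity passes from \<open>C\<^sub>1\<close> to \<open>C\<^sub>2\<close>.\<close>

lemma endpoint_in_affine_hull_open_segment:
  fixes a b :: "'a::real_vector"
  assumes "a \<noteq> b"
  shows "a \<in> affine hull (open_segment a b)"
proof -
  define m where "m = (1 - 1/2) *\<^sub>R a + (1/2::real) *\<^sub>R b"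
  define q where "q = (1 - 1/4) *\<^sub>R a + (1/4::real) *\<^sub>R b"
  have "m \<in> open_segment a b"
    unfolding m_def in_segment using assms by (intro conjI exI[of _ "1/2"]) auto
  moreover have "q \<in> open_segment a b"
    unfolding q_def in_segment using assms by (intro conjI exI[of _ "1/4"]) auto
  ultimately have "(2::real) *\<^sub>R q + (-1::real) *\<^sub>R m \<in> affine hull (open_segment a b)"
    by (intro mem_affine[OF affine_affine_hull]) (auto intro: hull_inc)
  moreover have "(2::real) *\<^sub>R q + (-1::real) *\<^sub>R m = a"
    unfolding q_def m_def by (simp add: scaleR_add_right algebra_simps flip: scaleR_diff_left)
  ultimately show ?thesis
    by simp
qed

lemma affine_hull_singleton: "affine hull {a :: 'a::real_vector} = {a}"
  by (metis affine_hull_eq affine_sing)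

lemma rel_interior_singleton:
  "rel_interior {a :: 'a::{real_vector,topological_space}} = {a}"
proof -
  have "openin (top_of_set (affine hull {a})) {a}"
    by (metis affine_hull_singleton openin_topspace topspace_euclidean_subtopology)
  then show ?thesis
    using rel_interior_maximal[of "{a}" "{a}"] rel_interior_subset by blast
qed

lemma subset_rel_closure: "S \<subseteq> rel_closure S"
  unfolding rel_closure_def by (rule closure_of_subset) (simp add: hull_subset)

lemma rel_closure_subset_affine_hull: "rel_closure S \<subseteq> affine hull S"
  unfolding rel_closure_def using closure_of_subset_topspace by fastforce

lemma affine_hull_subset_if_subset_rel_closure:
  assumes "T \<subseteq> rel_closure S"
  shows "affine hull T \<subseteq> affine hull S"
  using assms rel_closure_subset_affine_hull by (meson affine_affine_hull hull_minimal order_trans)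

lemma rel_closure_mono_same_affine_hull:
  assumes "T \<subseteq> rel_closure S" "affine hull T = affine hull S"
  shows "rel_closure T \<subseteq> rel_closure S"
  using closure_of_mono[OF assms(1)[unfolded rel_closure_def], of "top_of_set (affine hull S)"]
  unfolding rel_closure_def assms(2) by (simp only: closure_of_closure_of)

lemma strictly_convex_open_segment_subset:
  assumes "strictly_convex C" "x \<in> rel_closure C" "y \<in> rel_closure C" "x \<noteq> y"
  shows "open_segment x y \<subseteq> rel_interior C"
  using assms unfolding strictly_convex_def by blast

lemma affine_hull_eq_between_rel_interior_rel_closure:
  assumes ri: "rel_interior C1 \<subseteq> C2" and rc: "C2 \<subseteq> rel_closure C1"
    and "strictly_convex C1"
  shows "affine hull C2 = affine hull C1"
proof (cases "\<exists>x\<in>C1. \<exists>y\<in>C1. x \<noteq> y")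
  case True
  have "C1 \<subseteq> affine hull C2"
  proof
    fix c assume "c \<in> C1"
    with True obtain d where "d \<in> C1" "c \<noteq> d"
      by metis
    then have "open_segment c d \<subseteq> rel_interior C1"
      using \<open>c \<in> C1\<close> subset_rel_closure
      by (intro strictly_convex_open_segment_subset[OF \<open>strictly_convex C1\<close>]) auto
    then have "open_segment c d \<subseteq> C2"
      using ri by (rule order_trans)
    then show "c \<in> affine hull C2"
      using endpoint_in_affine_hull_open_segment[OF \<open>c \<noteq> d\<close>] hull_mono by blast
  qed
  then have "affine hull C1 \<subseteq> affine hull C2"
    by (meson affine_affine_hull hull_minimal)
  with affine_hull_subset_if_subset_rel_closure[OF rc] show ?thesis
    by blast
next
  case False
  then consider "C1 = {}" | c where "C1 = {c}"
    by blast
  then show ?thesis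
  proof cases
    case 1
    then have "C2 = {}"
      using rc rel_closure_subset_affine_hull[of C1] by simp
    with 1 show ?thesis
      by simp
  next
    case 2
    have "C2 \<subseteq> {c}"
      using rc rel_closure_subset_affine_hull[of C1] 2 affine_hull_singleton[of c] by blast
    moreover have "c \<in> C2"
      using ri 2 rel_interior_singleton[of c] by simp
    ultimately have "C2 = {c}"
      by blast
    with 2 show ?thesis
      by simp
  qed
qed

lemma strictly_convex_transfer:
  assumes "strictly_convex S" "rel_closure T \<subseteq> rel_closure S" "rel_interior S \<subseteq> rel_interior T"
  shows "strictly_convex T"
  using assms unfolding strictly_convex_def by blast

theorem mainTheorem13:
  fixes C1 C2 :: "'a::topological_real_vector set"
  assumes "rel_interior C1 \<subseteq> C2"
    and "C2 \<subseteq> rel_closure C1"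
    and "strictly_convex C1"
  shows "strictly_convex C2"
proof -
  have hull: "affine hull C2 = affine hull C1"
    using affine_hull_eq_between_rel_interior_rel_closure[OF assms] .
  have "rel_closure C2 \<subseteq> rel_closure C1"
    using rel_closure_mono_same_affine_hull[OF assms(2) hull] .
  moreover have "rel_interior C1 \<subseteq> rel_interior C2"
    by (rule rel_interior_maximal[OF assms(1)]) (metis hull openin_rel_interior)
  ultimately show ?thesis
    using strictly_convex_transfer[OF assms(3)] by blast
qed

end
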